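(* Let $A$ be a pro-$C^*$-algebra, $H$ a Hilbert space, $\rho=[\rho_{ij}]_{i,j=1}^n$ a completely $n$-positive linear map from $A$ to $L(H)$ with Stinespring representation $(\Phi_\rho,H_\rho,V_{\rho,1},\dots,V_{\rho,n})$, and let $T_1,T_2$ be positive elements of $\Phi_\rho(A)'$. Then $T_1\le T_2$ if and only if $\rho_{T_1}\le\rho_{T_2}$.
   Context: A pro-$C^*$-algebra is a complete Hausdorff topological $*$-algebra over $\mathbb{C}$ whose topology is determined by its continuous $C^*$-seminorms. A representation of $A$ on a Hilbert space $K$ is a continuous $*$-morphism $A\to L(K)$. An $n\times n$ matrix $[\rho_{ij}]$ of continuous linear maps $A\to L(H)$ is completely $n$-positive if the map $M_n(A)\to M_n(L(H))$, $[a_{ij}]\mapsto[\rho_{ij}(a_{ij})]$, is completely positive. For completely $n$-positive $\rho,\theta$, write $\theta\le\rho$ if $\rho-\theta$ is completely $n$-positive. The Stinespring representation of $\rho$ consists of a representation $\Phi_\rho$ of $A$ on a Hilbert space $H_\rho$ and $V_{\rho,1},\dots,V_{\rho,n}\in L(H,H_\rho)$ with $\rho_{ij}(a)=V_{\rho,i}^*\Phi_\rho(a)V_{\rho,j}$ and $\{\Phi_\rho(a)V_{\rho,i}\xi\}$ spanning a dense subspace of $H_\rho$ (it exists and is unique up to unitary equivalence). $\Phi_\rho(A)'$ is the commutant of $\Phi_\rho(A)$ in $L(H_\rho)$. For positive $T\in\Phi_\rho(A)'$, $\rho_T$ denotes the completely $n$-positive map $[a_{ij}]\mapsto[V_{\rho,i}^*T\Phi_\rho(a_{ij})V_{\rho,j}]_{i,j=1}^n$.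 *)

theory Defs
  imports Complex_Main
begin

class complex_vector = ab_group_add +
  fixes scaleC :: "complex \<Rightarrow> 'a \<Rightarrow> 'a" (infixr "*\<^sub>C" 75)
  assumes scaleC_add_right: "c *\<^sub>C (x + y) = c *\<^sub>C x + c *\<^sub>C y"
    and scaleC_add_left: "(c + d) *\<^sub>C x = c *\<^sub>C x + d *\<^sub>C x"
    and scaleC_scaleC: "c *\<^sub>C (d *\<^sub>C x) = (c * d) *\<^sub>C x"
    and scaleC_one: "1 *\<^sub>C x = x"

text \<open>Inner product, conjugate-linear in the first and linear in the second argument.\<close>
class complex_inner = complex_vector +
  fixes cinner :: "'a \<Rightarrow> 'a \<Rightarrow> complex"
  assumes cinner_commute: "cinner x y = cnj (cinner y x)"
    and cinner_add_right: "cinner x (y + z) = cinner x y + cinner x z"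
    and cinner_scaleC_right: "cinner x (c *\<^sub>C y) = c * cinner x y"
    and cinner_ge_zero: "0 \<le> Re (cinner x x)"
    and cinner_eq_zero_iff: "cinner x x = 0 \<longleftrightarrow> x = 0"

class chilbert = complex_inner +
  assumes cauchy_convergent:
    "(\<forall>e>0. \<exists>N::nat. \<forall>m\<ge>N. \<forall>k\<ge>N. sqrt (Re (cinner ((X::nat \<Rightarrow> 'a) m - X k) (X m - X k))) < e)
      \<Longrightarrow> (\<exists>l. \<forall>e>0. \<exists>N. \<forall>k\<ge>N. sqrt (Re (cinner (X k - l) (X k - l))) < e)"

definition cnorm :: "'a::complex_inner \<Rightarrow> real" where
  "cnorm x = sqrt (Re (cinner x x))"

definition cnonneg :: "complex \<Rightarrow> bool" where
  "cnonneg z \<longleftrightarrow> Im z = 0 \<and> 0 \<le> Re z"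

definition bounded_clinear :: "('a::complex_inner \<Rightarrow> 'b::complex_inner) \<Rightarrow> bool" where
  "bounded_clinear f \<longleftrightarrow>
     (\<forall>x y. f (x + y) = f x + f y) \<and> (\<forall>c x. f (c *\<^sub>C x) = c *\<^sub>C f x) \<and>
     (\<exists>K. \<forall>x. cnorm (f x) \<le> K * cnorm x)"

definition adj :: "('a::complex_inner \<Rightarrow> 'b::complex_inner) \<Rightarrow> 'b \<Rightarrow> 'a" where
  "adj f = (SOME g. \<forall>x y. cinner (f x) y = cinner x (g y))"

definition pos_op :: "('a::complex_inner \<Rightarrow> 'a) \<Rightarrow> bool" where
  "pos_op T \<longleftrightarrow> bounded_clinear T \<and> (\<forall>x. cnonneg (cinner x (T x)))"

definition op_le :: "('a::complex_inner \<Rightarrow> 'a) \<Rightarrow> ('a \<Rightarrow> 'a) \<Rightarrow> bool" where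
  "op_le S T \<longleftrightarrow> pos_op (\<lambda>x. T x - S x)"

definition cspan :: "'a::complex_vector set \<Rightarrow> 'a set" where
  "cspan S = {\<Sum>i<(m::nat). c i *\<^sub>C s i | m c s. \<forall>i<m. s i \<in> S}"

definition cdense :: "'a::complex_inner set \<Rightarrow> bool" where
  "cdense S \<longleftrightarrow> (\<forall>x. \<forall>e>0. \<exists>y\<in>S. cnorm (x - y) < e)"

class star_algebra = complex_vector + ring +
  fixes invol :: "'a \<Rightarrow> 'a"
  assumes scaleC_mult_left: "c *\<^sub>C (x * y) = (c *\<^sub>C x) * y"
    and scaleC_mult_right: "c *\<^sub>C (x * y) = x * (c *\<^sub>C y)"
    and invol_invol: "invol (invol x) = x"
    and invol_add: "invol (x + y) = invol x + invol y"
    and invol_scaleC: "invol (c *\<^sub>C x) = cnj c *\<^sub>C invol x"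
    and invol_mult: "invol (x * y) = invol y * invol x"

definition cstar_seminorm :: "('a::star_algebra \<Rightarrow> real) \<Rightarrow> bool" where
  "cstar_seminorm p \<longleftrightarrow>
     (\<forall>x y. p (x + y) \<le> p x + p y) \<and> (\<forall>c x. p (c *\<^sub>C x) = cmod c * p x) \<and>
     (\<forall>x y. p (x * y) \<le> p x * p y) \<and> (\<forall>x. p (invol x * x) = (p x)\<^sup>2)"

definition cont_cstar_seminorms :: "('a::{star_algebra,topological_space} \<Rightarrow> real) set" where
  "cont_cstar_seminorms = {p. cstar_seminorm p \<and> continuous_on UNIV p}"

text \<open>Completeness is completeness of the
  canonical uniform structure (every Cauchy filter converges).\<close>
definition pro_cstar_algebra :: "'a::{star_algebra,topological_space} itself \<Rightarrow> bool" where
  "pro_cstar_algebra _ \<longleftrightarrow>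
     \<comment> \<open>topological *-algebra\<close>
     continuous_on UNIV (\<lambda>(x::'a, y). x + y) \<and>
     continuous_on UNIV (\<lambda>(c, x::'a). c *\<^sub>C x) \<and>
     continuous_on UNIV (\<lambda>(x::'a, y). x * y) \<and>
     continuous_on UNIV (invol :: 'a \<Rightarrow> 'a) \<and>
     \<comment> \<open>Hausdorff\<close>
     (\<forall>x y::'a. x \<noteq> y \<longrightarrow> (\<exists>U V. open U \<and> open V \<and> x \<in> U \<and> y \<in> V \<and> U \<inter> V = {})) \<and>
     \<comment> \<open>topology determined by the continuous C*-seminorms\<close>
     (\<forall>S::'a set. open S \<longleftrightarrow>
        (\<forall>x\<in>S. \<exists>F e. finite F \<and> F \<subseteq> cont_cstar_seminorms \<and> e > 0 \<and>
                  {y. \<forall>p\<in>F. p (y - x) < e} \<subseteq> S)) \<and>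
     \<comment> \<open>complete\<close>
     (\<forall>F::'a filter. F \<noteq> bot \<longrightarrow>
        (\<forall>U. open U \<and> 0 \<in> U \<longrightarrow> eventually (\<lambda>(x, y). x - y \<in> U) (F \<times>\<^sub>F F)) \<longrightarrow>
        (\<exists>l. F \<le> nhds l))"

text \<open>Continuous linear map \<open>A \<rightarrow> L(H)\<close> (norm topology on \<open>L(H)\<close>).\<close>
definition cont_linear_op ::
  "('a::{star_algebra,topological_space} \<Rightarrow> 'h::complex_inner \<Rightarrow> 'k::complex_inner) \<Rightarrow> bool" where
  "cont_linear_op \<phi> \<longleftrightarrow>
     (\<forall>a. bounded_clinear (\<phi> a)) \<and>
     (\<forall>a b x. \<phi> (a + b) x = \<phi> a x + \<phi> b x) \<and>
     (\<forall>c a x. \<phi> (c *\<^sub>C a) x = c *\<^sub>C \<phi> a x) \<and>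
     (\<forall>a0. \<forall>e>0. \<exists>U. open U \<and> a0 \<in> U \<and>
        (\<forall>a\<in>U. \<forall>x. cnorm (\<phi> a x - \<phi> a0 x) \<le> e * cnorm x))"

definition representation ::
  "('a::{star_algebra,topological_space} \<Rightarrow> 'k::chilbert \<Rightarrow> 'k) \<Rightarrow> bool" where
  "representation \<Phi> \<longleftrightarrow> cont_linear_op \<Phi> \<and>
     (\<forall>a b. \<Phi> (a * b) = \<Phi> a \<circ> \<Phi> b) \<and> (\<forall>a. \<Phi> (invol a) = adj (\<Phi> a))"

text \<open>Positivity in matrix algebras over \<open>A\<close> (\<open>x = y\<^sup>* y\<close>) and over \<open>L(H)\<close>
  (positivity of the operator on \<open>H\<^sup>N\<close>); matrices are indexed by a finite set \<open>I\<close>.\<close>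
definition mat_pos_alg :: "'i set \<Rightarrow> ('i \<Rightarrow> 'i \<Rightarrow> 'a::star_algebra) \<Rightarrow> bool" where
  "mat_pos_alg I x \<longleftrightarrow>
     (\<exists>y. \<forall>p\<in>I. \<forall>q\<in>I. x p q = (\<Sum>r\<in>I. invol (y r p) * y r q))"

definition mat_pos_op :: "'i set \<Rightarrow> ('i \<Rightarrow> 'i \<Rightarrow> 'h::complex_inner \<Rightarrow> 'h) \<Rightarrow> bool" where
  "mat_pos_op I T \<longleftrightarrow> (\<forall>\<xi>. cnonneg (\<Sum>p\<in>I. \<Sum>q\<in>I. cinner (\<xi> p) (T p q (\<xi> q))))"

text \<open>Completely n-positive matrix \<open>[\<rho>\<^sub>i\<^sub>j]\<close> (indices \<open>0..n-1\<close>) of continuous linear maps: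
  \<open>M\<^sub>n(A) \<rightarrow> M\<^sub>n(L(H))\<close>, \<open>[a\<^sub>i\<^sub>j] \<mapsto> [\<rho>\<^sub>i\<^sub>j(a\<^sub>i\<^sub>j)]\<close> is completely positive, where
  \<open>M\<^sub>m(M\<^sub>n(-))\<close> is indexed by pairs \<open>(k,i)\<close>, \<open>k<m\<close>, \<open>i<n\<close>.\<close>
definition completely_n_positive ::
  "nat \<Rightarrow> (nat \<Rightarrow> nat \<Rightarrow> 'a::{star_algebra,topological_space} \<Rightarrow> 'h::complex_inner \<Rightarrow> 'h) \<Rightarrow> bool" where
  "completely_n_positive n \<rho> \<longleftrightarrow>
     (\<forall>i<n. \<forall>j<n. cont_linear_op (\<rho> i j)) \<and>
     (\<forall>(m::nat) x. mat_pos_alg ({..<m} \<times> {..<n}) x \<longrightarrow>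
        mat_pos_op ({..<m} \<times> {..<n}) (\<lambda>(k, i) (l, j). \<rho> i j (x (k, i) (l, j))))"

definition cpn_le ::
  "nat \<Rightarrow> (nat \<Rightarrow> nat \<Rightarrow> 'a::{star_algebra,topological_space} \<Rightarrow> 'h::complex_inner \<Rightarrow> 'h)
       \<Rightarrow> (nat \<Rightarrow> nat \<Rightarrow> 'a \<Rightarrow> 'h \<Rightarrow> 'h) \<Rightarrow> bool" where
  "cpn_le n \<theta> \<rho> \<longleftrightarrow> completely_n_positive n (\<lambda>i j a x. \<rho> i j a x - \<theta> i j a x)"

definition stinespring_rep ::
  "nat \<Rightarrow> (nat \<Rightarrow> nat \<Rightarrow> 'a::{star_algebra,topological_space} \<Rightarrow> 'h::chilbert \<Rightarrow> 'h)
       \<Rightarrow> ('a \<Rightarrow> 'k::chilbert \<Rightarrow> 'k) \<Rightarrow> (nat \<Rightarrow> 'h \<Rightarrow> 'k) \<Rightarrow> bool" where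
  "stinespring_rep n \<rho> \<Phi> V \<longleftrightarrow>
     representation \<Phi> \<and> (\<forall>i<n. bounded_clinear (V i)) \<and>
     (\<forall>i<n. \<forall>j<n. \<forall>a. \<rho> i j a = adj (V i) \<circ> \<Phi> a \<circ> V j) \<and>
     cdense (cspan {\<Phi> a (V i \<xi>) | a i \<xi>. i < n})"

definition commutant :: "('a \<Rightarrow> 'k::complex_inner \<Rightarrow> 'k) \<Rightarrow> ('k \<Rightarrow> 'k) set" where
  "commutant \<Phi> = {T. bounded_clinear T \<and> (\<forall>a. T \<circ> \<Phi> a = \<Phi> a \<circ> T)}"

definition rho_T :: "(nat \<Rightarrow> 'h::complex_inner \<Rightarrow> 'k::complex_inner) \<Rightarrow> ('a \<Rightarrow> 'k \<Rightarrow> 'k)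
                      \<Rightarrow> ('k \<Rightarrow> 'k) \<Rightarrow> nat \<Rightarrow> nat \<Rightarrow> 'a \<Rightarrow> 'h \<Rightarrow> 'h" where
  "rho_T V \<Phi> T = (\<lambda>i j a. adj (V i) \<circ> T \<circ> \<Phi> a \<circ> V j)"

end

theory Submission
  imports Defs
begin

text \<open>
  Put \<open>S = T2 - T1\<close>, again an element of the commutant. The Stinespring factorisation gives
  \<open>\<rho>\<^sub>T\<^sub>2 - \<rho>\<^sub>T\<^sub>1 = \<rho>\<^sub>S\<close>, and because \<open>S\<close> commutes with \<open>\<Phi>(A)\<close> the quadratic form of
  \<open>\<rho>\<^sub>S\<close> at a positive matrix \<open>[\<Sum>\<^sub>r y\<^sub>r\<^sub>p\<^sup>* y\<^sub>r\<^sub>q]\<close> and vectors \<open>\<xi>\<^sub>p\<close> is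
  \<open>\<Sum>\<^sub>r \<langle>w\<^sub>r, S w\<^sub>r\<rangle>\<close> with \<open>w\<^sub>r = \<Sum>\<^sub>p \<Phi>(y\<^sub>r\<^sub>p) V\<^sub>p \<xi>\<^sub>p\<close>. Hence \<open>S \<ge> 0\<close> makes \<open>\<rho>\<^sub>S\<close>
  completely \<open>n\<close>-positive. Conversely, rank-one matrices \<open>[y\<^sub>p\<^sup>* y\<^sub>q]\<close> turn complete
  \<open>n\<close>-positivity of \<open>\<rho>\<^sub>S\<close> into \<open>\<langle>v, S v\<rangle> \<ge> 0\<close> for every \<open>v\<close> in the span of the vectors
  \<open>\<Phi>(a) V\<^sub>i \<xi>\<close>; this span is dense, and the quadratic form of \<open>S\<close> is continuous.

  The adjoints \<open>V\<^sub>i\<^sup>*\<close> and \<open>\<Phi>(a)\<^sup>*\<close> exist by the Riesz representation theorem, obtained from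
  completeness through the minimal-norm point of the hyperplane \<open>f = 1\<close>.
\<close>

section \<open>Inner product spaces and bounded operators\<close>

global_interpretation complex_vector: vector_space "scaleC :: complex \<Rightarrow> 'a \<Rightarrow> 'a::complex_vector"
  by unfold_locales (simp_all add: scaleC_add_right scaleC_add_left scaleC_scaleC scaleC_one)

lemma cinner_add_left: "cinner (x + y) z = cinner x z + cinner y z"
  by (metis cinner_add_right cinner_commute complex_cnj_add)

lemma cinner_scaleC_left: "cinner (c *\<^sub>C x) y = cnj c * cinner x y"
  by (metis cinner_commute cinner_scaleC_right complex_cnj_mult)

lemma cinner_zero_right [simp]: "cinner x 0 = 0"
  by (metis cinner_scaleC_right complex_vector.scale_zero_left mult_zero_left)

lemma cinner_zero_left [simp]: "cinner 0 x = 0"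
  by (metis cinner_commute cinner_zero_right complex_cnj_zero)

lemma cinner_diff_right: "cinner x (y - z) = cinner x y - cinner x z"
  by (metis cinner_add_right eq_diff_eq)

lemma cinner_diff_left: "cinner (x - y) z = cinner x z - cinner y z"
  by (metis cinner_add_left eq_diff_eq)

lemma cinner_minus_right: "cinner x (- y) = - cinner x y"
  using cinner_diff_right[of x 0 y] by simp

lemma cinner_sum_right: "cinner x (\<Sum>i\<in>A. f i) = (\<Sum>i\<in>A. cinner x (f i))"
  by (induction A rule: infinite_finite_induct) (auto simp: cinner_add_right)

lemma cinner_sum_left: "cinner (\<Sum>i\<in>A. f i) x = (\<Sum>i\<in>A. cinner (f i) x)"
  by (induction A rule: infinite_finite_induct) (auto simp: cinner_add_left)

lemma cinner_ext: "(\<And>z. cinner z x = cinner z y) \<Longrightarrow> x = y"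
  by (metis cinner_diff_right cinner_eq_zero_iff eq_iff_diff_eq_0)

lemma cnorm_nonneg [simp]: "0 \<le> cnorm x"
  using cinner_ge_zero[of x] by (simp add: cnorm_def)

lemma cnorm_power2: "(cnorm x)\<^sup>2 = Re (cinner x x)"
  using cinner_ge_zero[of x] by (simp add: cnorm_def)

lemma cinner_self_eq_cnorm: "cinner x x = complex_of_real ((cnorm x)\<^sup>2)"
  by (metis Reals_cnj_iff cinner_commute cnorm_power2 of_real_Re)

lemma cnorm_eq_zero_iff [simp]: "cnorm x = 0 \<longleftrightarrow> x = 0"
  by (metis cinner_eq_zero_iff cinner_self_eq_cnorm of_real_eq_0_iff zero_eq_power2)

lemma cnorm_zero [simp]: "cnorm 0 = 0"
  by simp

lemma cnorm_add_power2:
  "(cnorm (x + y))\<^sup>2 = (cnorm x)\<^sup>2 + 2 * Re (cinner x y) + (cnorm y)\<^sup>2"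
proof -
  have "Re (cinner y x) = Re (cinner x y)"
    by (subst cinner_commute) simp
  then show ?thesis
    by (simp add: cnorm_power2 cinner_add_left cinner_add_right)
qed

lemma cnorm_scaleC: "cnorm (c *\<^sub>C x) = cmod c * cnorm x"
proof -
  have "cinner (c *\<^sub>C x) (c *\<^sub>C x) = (cnj c * c) * cinner x x"
    by (simp add: cinner_scaleC_left cinner_scaleC_right)
  also have "\<dots> = complex_of_real ((cmod c)\<^sup>2) * complex_of_real ((cnorm x)\<^sup>2)"
    by (metis cinner_self_eq_cnorm complex_norm_square mult.commute)
  also have "\<dots> = complex_of_real ((cmod c * cnorm x)\<^sup>2)"
    by (simp add: power_mult_distrib)
  finally have "(cnorm (c *\<^sub>C x))\<^sup>2 = (cmod c * cnorm x)\<^sup>2"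
    unfolding cnorm_power2 by (metis Re_complex_of_real)
  then show ?thesis
    by simp
qed

lemma cnorm_minus [simp]: "cnorm (- x) = cnorm x"
  using cnorm_scaleC[of "-1" x] by simp

lemma cnorm_minus_commute: "cnorm (x - y) = cnorm (y - x)"
  by (metis cnorm_minus minus_diff_eq)

lemma parallelogram_law:
  "(cnorm (x + y))\<^sup>2 + (cnorm (x - y))\<^sup>2 = 2 * (cnorm x)\<^sup>2 + 2 * (cnorm y)\<^sup>2"
proof -
  have "(cnorm (x - y))\<^sup>2 = (cnorm x)\<^sup>2 - 2 * Re (cinner x y) + (cnorm y)\<^sup>2"
    using cnorm_add_power2[of x "- y"] by (simp add: cinner_minus_right)
  then show ?thesis
    by (simp add: cnorm_add_power2)
qed

lemma cauchy_schwarz: "cmod (cinner x y) \<le> cnorm x * cnorm y"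
proof (cases "y = 0")
  case True
  then show ?thesis by simp
next
  case False
  define r where "r = (cnorm y)\<^sup>2"
  have "r > 0" using False by (simp add: r_def)
  define a where "a = cinner y x"
  have xy: "cinner x y = cnj a"
    by (simp add: a_def flip: cinner_commute)
  have aa: "cnj a * a = complex_of_real ((cmod a)\<^sup>2)"
    by (metis complex_norm_square mult.commute)
  define t where "t = a / complex_of_real r"
  have ta: "t * complex_of_real r = a"
    using \<open>r > 0\<close> by (simp add: t_def)
  have ct: "cnj t * a = complex_of_real ((cmod a)\<^sup>2 / r)"
    using aa by (simp add: t_def)
  have "cinner (x - t *\<^sub>C y) (x - t *\<^sub>C y)
      = cinner x x - t * cinner x y - cnj t * cinner y x + cnj t * t * cinner y y"
    by (simp add: cinner_diff_left cinner_diff_right cinner_scaleC_left cinner_scaleC_right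
        algebra_simps)
  also have "\<dots> = cinner x x - cnj (cnj t * a) - cnj t * a + cnj t * (t * complex_of_real r)"
    by (simp add: xy a_def r_def cinner_self_eq_cnorm[of y] mult.assoc)
  also have "\<dots> = complex_of_real ((cnorm x)\<^sup>2 - (cmod a)\<^sup>2 / r)"
    by (simp only: ta ct cinner_self_eq_cnorm[of x] complex_cnj_complex_of_real) simp
  finally have "0 \<le> (cnorm x)\<^sup>2 - (cmod a)\<^sup>2 / r"
    by (metis Re_complex_of_real cinner_ge_zero)
  then have "(cmod a)\<^sup>2 / r \<le> (cnorm x)\<^sup>2"
    by simp
  then have "(cmod (cinner x y))\<^sup>2 \<le> (cnorm x * cnorm y)\<^sup>2"
    using \<open>r > 0\<close> by (simp add: xy r_def pos_divide_le_eq power_mult_distrib)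
  then show ?thesis
    by (rule power2_le_imp_le) simp
qed

lemma cnorm_triangle: "cnorm (x + y) \<le> cnorm x + cnorm y"
proof -
  have "Re (cinner x y) \<le> cnorm x * cnorm y"
    using complex_Re_le_cmod[of "cinner x y"] cauchy_schwarz[of x y] by linarith
  then have "(cnorm (x + y))\<^sup>2 \<le> (cnorm x + cnorm y)\<^sup>2"
    by (simp add: cnorm_add_power2 power2_sum)
  then show ?thesis
    by (rule power2_le_imp_le) simp
qed

lemma cnorm_diff_triangle: "cnorm (x - y) \<le> cnorm x + cnorm y"
  using cnorm_triangle[of x "- y"] by simp

lemma cnorm_triangle_ineq3: "\<bar>cnorm x - cnorm y\<bar> \<le> cnorm (x - y)"
  using cnorm_triangle[of "x - y" y] cnorm_triangle[of "y - x" x] cnorm_minus_commute[of x y]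
  by simp

lemma bounded_clinear_add: "bounded_clinear f \<Longrightarrow> f (x + y) = f x + f y"
  by (simp add: bounded_clinear_def)

lemma bounded_clinear_scaleC: "bounded_clinear f \<Longrightarrow> f (c *\<^sub>C x) = c *\<^sub>C f x"
  by (simp add: bounded_clinear_def)

lemma bounded_clinear_zero: "bounded_clinear f \<Longrightarrow> f 0 = 0"
  using bounded_clinear_scaleC[of f 0 0] by simp

lemma bounded_clinear_diff: "bounded_clinear f \<Longrightarrow> f (x - y) = f x - f y"
  by (metis bounded_clinear_add eq_diff_eq)

lemma bounded_clinear_sum: "bounded_clinear f \<Longrightarrow> f (\<Sum>i\<in>A. g i) = (\<Sum>i\<in>A. f (g i))"
  by (induction A rule: infinite_finite_induct) (auto simp: bounded_clinear_add bounded_clinear_zero)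

lemma bounded_clinear_bound:
  assumes "bounded_clinear f"
  obtains K where "K \<ge> 0" "\<And>x. cnorm (f x) \<le> K * cnorm x"
proof -
  obtain K where K: "\<And>x. cnorm (f x) \<le> K * cnorm x"
    using assms by (auto simp: bounded_clinear_def)
  have "cnorm (f x) \<le> max K 0 * cnorm x" for x
    using K[of x] mult_right_mono[of K "max K 0" "cnorm x"] by simp
  then show ?thesis
    using that[of "max K 0"] by simp
qed

lemma bounded_clinear_compose:
  assumes f: "bounded_clinear f" and g: "bounded_clinear g"
  shows "bounded_clinear (\<lambda>x. f (g x))"
proof -
  obtain K1 where K1: "K1 \<ge> 0" "\<And>x. cnorm (f x) \<le> K1 * cnorm x"
    using bounded_clinear_bound[OF f] by blast
  obtain K2 where K2: "\<And>x. cnorm (g x) \<le> K2 * cnorm x"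
    using bounded_clinear_bound[OF g] by blast
  have "cnorm (f (g x)) \<le> (K1 * K2) * cnorm x" for x
    using K1(2)[of "g x"] mult_left_mono[OF K2[of x] K1(1)] by simp
  then show ?thesis
    using f g by (auto simp: bounded_clinear_def)
qed

lemma bounded_clinear_sub:
  assumes f: "bounded_clinear f" and g: "bounded_clinear g"
  shows "bounded_clinear (\<lambda>x. f x - g x)"
proof -
  obtain K1 where K1: "\<And>x. cnorm (f x) \<le> K1 * cnorm x"
    using bounded_clinear_bound[OF f] by blast
  obtain K2 where K2: "\<And>x. cnorm (g x) \<le> K2 * cnorm x"
    using bounded_clinear_bound[OF g] by blast
  have "cnorm (f x - g x) \<le> (K1 + K2) * cnorm x" for x
    using cnorm_diff_triangle[of "f x" "g x"] K1[of x] K2[of x] by (simp add: distrib_right)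
  moreover have "f (x + y) - g (x + y) = (f x - g x) + (f y - g y)" for x y
    by (simp add: bounded_clinear_add[OF f] bounded_clinear_add[OF g])
  moreover have "f (c *\<^sub>C x) - g (c *\<^sub>C x) = c *\<^sub>C (f x - g x)" for c x
    by (simp add: bounded_clinear_scaleC[OF f] bounded_clinear_scaleC[OF g]
        complex_vector.scale_right_diff_distrib)
  ultimately show ?thesis
    unfolding bounded_clinear_def by blast
qed

section \<open>The Riesz representation theorem and adjoints\<close>

lemma chilbert_complete:
  fixes X :: "nat \<Rightarrow> 'a::chilbert"
  assumes "\<And>e. e > 0 \<Longrightarrow> \<exists>N. \<forall>m\<ge>N. \<forall>k\<ge>N. cnorm (X m - X k) < e"
  obtains l where "(\<lambda>k. cnorm (X k - l)) \<longlonglongrightarrow> 0"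
proof -
  have "\<forall>e>0. \<exists>N. \<forall>m\<ge>N. \<forall>k\<ge>N. sqrt (Re (cinner (X m - X k) (X m - X k))) < e"
    using assms by (simp add: cnorm_def)
  from cauchy_convergent[OF this] obtain l
    where "\<forall>e>0. \<exists>N. \<forall>k\<ge>N. sqrt (Re (cinner (X k - l) (X k - l))) < e"
    by blast
  then have "\<forall>e>0. \<exists>N. \<forall>k\<ge>N. \<bar>cnorm (X k - l)\<bar> < e"
    by (simp add: cnorm_def[symmetric])
  then show ?thesis
    using that by (simp only: LIMSEQ_iff real_norm_def diff_0_right)
qed

lemma chilbert_convergent_if_dist_bound:
  fixes X :: "nat \<Rightarrow> 'a::chilbert"
  assumes bound: "\<And>k l. (cnorm (X k - X l))\<^sup>2 \<le> 2 / real (Suc k) + 2 / real (Suc l)"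
  obtains w where "(\<lambda>k. cnorm (X k - w)) \<longlonglongrightarrow> 0"
proof (rule chilbert_complete[OF _ that])
  fix e :: real
  assume "e > 0"
  obtain N :: nat where "4 / e\<^sup>2 < real N"
    using reals_Archimedean2 by blast
  then have "4 / e\<^sup>2 < real (Suc N)"
    by simp
  then have N: "4 / real (Suc N) < e\<^sup>2"
    using \<open>e > 0\<close> by (simp add: field_simps)
  have "cnorm (X m - X k) < e" if "N \<le> m" "N \<le> k" for m k
  proof -
    have "2 / real (Suc m) \<le> 2 / real (Suc N)" "2 / real (Suc k) \<le> 2 / real (Suc N)"
      using that by (simp_all add: frac_le)
    then have "(cnorm (X m - X k))\<^sup>2 < e\<^sup>2"
      using bound[of m k] N by simp
    then show ?thesis
      using \<open>e > 0\<close> by (simp add: power_less_imp_less_base)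
  qed
  then show "\<exists>N. \<forall>m\<ge>N. \<forall>k\<ge>N. cnorm (X m - X k) < e"
    by blast
qed

lemma min_norm_point_exists:
  fixes C :: "'a::chilbert set"
  assumes "C \<noteq> {}"
    and midpoint: "\<And>a b. a \<in> C \<Longrightarrow> b \<in> C \<Longrightarrow> (1/2) *\<^sub>C (a + b) \<in> C"
    and closed: "\<And>X w. (\<And>k. X k \<in> C) \<Longrightarrow> (\<lambda>k. cnorm (X k - w)) \<longlonglongrightarrow> 0 \<Longrightarrow> w \<in> C"
  obtains w where "w \<in> C" "\<And>c. c \<in> C \<Longrightarrow> cnorm w \<le> cnorm c"
proof -
  define d where "d = Inf ((\<lambda>x. (cnorm x)\<^sup>2) ` C)"
  have d_le: "d \<le> (cnorm c)\<^sup>2" if "c \<in> C" for c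
    unfolding d_def by (rule cInf_lower) (use that in \<open>auto intro: bdd_belowI[of _ 0]\<close>)
  have "\<exists>x\<in>C. (cnorm x)\<^sup>2 < d + 1 / real (Suc k)" for k
    using cInf_lessD[of "(\<lambda>x. (cnorm x)\<^sup>2) ` C" "d + 1 / real (Suc k)"] \<open>C \<noteq> {}\<close>
    by (simp add: d_def)
  then obtain X where X: "\<And>k. X k \<in> C" and Xd: "\<And>k. (cnorm (X k))\<^sup>2 < d + 1 / real (Suc k)"
    by metis
  have cauchy: "(cnorm (X k - X l))\<^sup>2 \<le> 2 / real (Suc k) + 2 / real (Suc l)" for k l
  proof -
    have "d \<le> (cnorm ((1/2) *\<^sub>C (X k + X l)))\<^sup>2"
      using midpoint X d_le by blast
    then have "4 * d \<le> (cnorm (X k + X l))\<^sup>2"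
      by (simp add: cnorm_scaleC power_divide)
    then show ?thesis
      using parallelogram_law[of "X k" "X l"] Xd[of k] Xd[of l] by linarith
  qed
  obtain w where conv: "(\<lambda>k. cnorm (X k - w)) \<longlonglongrightarrow> 0"
    using chilbert_convergent_if_dist_bound[OF cauchy] by blast
  have "(\<lambda>k. (cnorm (X k))\<^sup>2) \<longlonglongrightarrow> d"
  proof (rule tendsto_sandwich)
    show "\<forall>\<^sub>F k in sequentially. d \<le> (cnorm (X k))\<^sup>2"
      using X d_le by simp
    show "\<forall>\<^sub>F k in sequentially. (cnorm (X k))\<^sup>2 \<le> d + inverse (real (Suc k))"
      using Xd by (simp add: less_imp_le inverse_eq_divide)
    show "(\<lambda>k. d + inverse (real (Suc k))) \<longlonglongrightarrow> d"
      using tendsto_add[OF tendsto_const LIMSEQ_inverse_real_of_nat] by simp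
  qed simp
  moreover have "(\<lambda>k. cnorm (X k)) \<longlonglongrightarrow> cnorm w"
    by (rule LIM_zero_cancel, rule tendsto_0_le[OF conv, of _ 1])
      (simp add: cnorm_triangle_ineq3)
  then have "(\<lambda>k. (cnorm (X k))\<^sup>2) \<longlonglongrightarrow> (cnorm w)\<^sup>2"
    by (rule tendsto_power)
  ultimately have "(cnorm w)\<^sup>2 = d"
    by (rule LIMSEQ_unique[rotated])
  then have "cnorm w \<le> cnorm c" if "c \<in> C" for c
    using d_le[OF that] by (simp add: power2_le_imp_le)
  then show ?thesis
    using that closed[OF X conv] by blast
qed

lemma min_norm_orthogonal:
  assumes "\<And>t. cnorm w \<le> cnorm (w + t *\<^sub>C v)"
  shows "cinner w v = 0"
proof -
  define c where "c = cinner w v"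
  define s where "s = 1 / ((cnorm v)\<^sup>2 + 1)"
  have "0 < (cnorm v)\<^sup>2 + 1"
    by (simp add: add_nonneg_pos)
  then have "s > 0" "s * (cnorm v)\<^sup>2 < 1"
    by (simp_all add: s_def divide_less_eq)
  define t where "t = - complex_of_real s * cnj c"
  have "cnj c * c = complex_of_real ((cmod c)\<^sup>2)"
    by (metis complex_norm_square mult.commute)
  then have "t * c = - complex_of_real (s * (cmod c)\<^sup>2)"
    by (simp add: t_def mult.assoc)
  then have "Re (cinner w (t *\<^sub>C v)) = - s * (cmod c)\<^sup>2"
    by (simp add: cinner_scaleC_right flip: c_def)
  moreover have "cmod t = s * cmod c"
    using \<open>s > 0\<close> by (simp add: t_def norm_mult)
  moreover have "(cnorm w)\<^sup>2 \<le> (cnorm (w + t *\<^sub>C v))\<^sup>2"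
    using assms by (simp add: power_mono)
  ultimately have "0 \<le> - 2 * s * (cmod c)\<^sup>2 + (s * cmod c)\<^sup>2 * (cnorm v)\<^sup>2"
    by (simp add: cnorm_add_power2 cnorm_scaleC power_mult_distrib)
  then have "0 \<le> s * (cmod c)\<^sup>2 * (s * (cnorm v)\<^sup>2 - 2)"
    by (simp add: algebra_simps power2_eq_square)
  with \<open>s > 0\<close> \<open>s * (cnorm v)\<^sup>2 < 1\<close> have "(cmod c)\<^sup>2 \<le> 0"
    by (smt (verit) mult_pos_pos zero_le_mult_iff)
  then show ?thesis
    by (simp add: c_def)
qed

lemma bounded_functional_limit:
  fixes f :: "'a::complex_inner \<Rightarrow> complex"
  assumes add: "\<And>x y. f (x + y) = f x + f y" and bound: "\<And>x. cmod (f x) \<le> K * cnorm x"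
    and X: "\<And>k. f (X k) = c" and conv: "(\<lambda>k. cnorm (X k - w)) \<longlonglongrightarrow> 0"
  shows "f w = c"
proof -
  have "cmod (f w - c) \<le> K * cnorm (X k - w)" for k
    using bound[of "X k - w"] add[of "X k - w" w] X[of k] by (simp add: norm_minus_commute)
  then have "cmod (f w - c) \<le> 0"
    using LIMSEQ_le_const[OF tendsto_mult_right_zero[OF conv, of K]] by blast
  then show ?thesis
    by simp
qed

lemma riesz_representation:
  fixes f :: "'a::chilbert \<Rightarrow> complex"
  assumes add: "\<And>x y. f (x + y) = f x + f y"
    and scale: "\<And>c x. f (c *\<^sub>C x) = c * f x"
    and bound: "\<And>x. cmod (f x) \<le> K * cnorm x"
  obtains z where "\<And>x. f x = cinner z x"
proof (cases "\<forall>x. f x = 0")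
  case True
  then show ?thesis
    using that[of 0] by simp
next
  case False
  then obtain u where "f u \<noteq> 0"
    by blast
  have diff: "f (x - y) = f x - f y" for x y
    by (metis add eq_diff_eq)
  \<comment> \<open>the minimal-norm point \<open>w\<close> of \<open>f = 1\<close> is orthogonal to \<open>x - f x w \<in> ker f\<close>\<close>
  define C where "C = {x. f x = 1}"
  have "(1 / f u) *\<^sub>C u \<in> C"
    using \<open>f u \<noteq> 0\<close> by (simp add: C_def scale)
  moreover have "(1/2) *\<^sub>C (a + b) \<in> C" if "a \<in> C" "b \<in> C" for a b
    using that by (simp add: C_def scale add)
  moreover have "w \<in> C" if "\<And>k. X k \<in> C" and "(\<lambda>k. cnorm (X k - w)) \<longlonglongrightarrow> 0" for X w
    using that bounded_functional_limit[OF add bound, of X 1 w] by (simp add: C_def)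
  ultimately obtain w where "w \<in> C" and w_min: "\<And>c. c \<in> C \<Longrightarrow> cnorm w \<le> cnorm c"
    using min_norm_point_exists[of C] by blast
  then have fw: "f w = 1"
    by (simp add: C_def)
  have "w + t *\<^sub>C (x - f x *\<^sub>C w) \<in> C" for t x
    by (simp add: C_def add scale diff fw)
  then have orth: "cinner w (x - f x *\<^sub>C w) = 0" for x
    using w_min by (blast intro: min_norm_orthogonal)
  have wx: "cinner w x = f x * cinner w w" for x
    using orth[of x] by (simp add: cinner_diff_right cinner_scaleC_right)
  have "cinner w w \<noteq> 0"
    using fw scale[of 0 0] by (auto simp: cinner_eq_zero_iff)
  then have "f x = cinner ((1 / cnj (cinner w w)) *\<^sub>C w) x" for x
    using wx[of x] by (simp add: cinner_scaleC_left)
  then show ?thesis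
    by (rule that)
qed

lemma adj_exists:
  fixes f :: "'a::chilbert \<Rightarrow> 'b::complex_inner"
  assumes f: "bounded_clinear f"
  shows "\<exists>g. \<forall>x y. cinner (f x) y = cinner x (g y)"
proof -
  obtain K where K: "K \<ge> 0" "\<And>x. cnorm (f x) \<le> K * cnorm x"
    using bounded_clinear_bound[OF f] by blast
  have "\<exists>z. \<forall>x. cinner (f x) y = cinner x z" for y
  proof -
    have "cinner y (f (a + b)) = cinner y (f a) + cinner y (f b)" for a b
      by (simp add: bounded_clinear_add[OF f] cinner_add_right)
    moreover have "cinner y (f (c *\<^sub>C a)) = c * cinner y (f a)" for c a
      by (simp add: bounded_clinear_scaleC[OF f] cinner_scaleC_right)
    moreover have "cmod (cinner y (f x)) \<le> (cnorm y * K) * cnorm x" for x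
      using cauchy_schwarz[of y "f x"] mult_left_mono[OF K(2)[of x], of "cnorm y"] by simp
    ultimately obtain z where z: "\<And>x. cinner y (f x) = cinner z x"
      using riesz_representation[of "\<lambda>x. cinner y (f x)" "cnorm y * K"] by blast
    have "cinner (f x) y = cinner x z" for x
      by (metis z cinner_commute)
    then show ?thesis
      by blast
  qed
  then show ?thesis
    by metis
qed

lemma cinner_adj:
  fixes f :: "'a::chilbert \<Rightarrow> 'b::complex_inner"
  assumes "bounded_clinear f"
  shows "cinner (f x) y = cinner x (adj f y)"
  using someI_ex[OF adj_exists[OF assms]] unfolding adj_def by blast

lemma bounded_clinear_adj:
  fixes f :: "'a::chilbert \<Rightarrow> 'b::complex_inner"
  assumes f: "bounded_clinear f"
  shows "bounded_clinear (adj f)"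
proof -
  obtain K where K: "K \<ge> 0" "\<And>x. cnorm (f x) \<le> K * cnorm x"
    using bounded_clinear_bound[OF f] by blast
  have "cnorm (adj f y) \<le> K * cnorm y" for y
  proof -
    have "(cnorm (adj f y))\<^sup>2 = Re (cinner (f (adj f y)) y)"
      by (simp add: cnorm_power2 cinner_adj[OF f])
    also have "\<dots> \<le> cnorm (f (adj f y)) * cnorm y"
      using complex_Re_le_cmod cauchy_schwarz by (rule order_trans)
    also have "\<dots> \<le> cnorm (adj f y) * (K * cnorm y)"
      using mult_right_mono[OF K(2)[of "adj f y"], of "cnorm y"] by (simp add: mult_ac)
    finally have "cnorm (adj f y) * cnorm (adj f y) \<le> cnorm (adj f y) * (K * cnorm y)"
      by (simp add: power2_eq_square)
    then show ?thesis
      using K(1) mult_le_cancel_left_pos[of "cnorm (adj f y)"]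
      by (cases "adj f y = 0") (auto simp: less_le)
  qed
  moreover have "adj f (x + y) = adj f x + adj f y" for x y
    by (rule cinner_ext) (simp add: cinner_add_right flip: cinner_adj[OF f])
  moreover have "adj f (c *\<^sub>C x) = c *\<^sub>C adj f x" for c x
    by (rule cinner_ext) (simp add: cinner_scaleC_right flip: cinner_adj[OF f])
  ultimately show ?thesis
    by (auto simp: bounded_clinear_def)
qed

section \<open>Positive quadratic forms\<close>

lemma cnonneg_sum: "(\<And>i. i \<in> A \<Longrightarrow> cnonneg (f i)) \<Longrightarrow> cnonneg (sum f A)"
  by (induction A rule: infinite_finite_induct) (auto simp: cnonneg_def)

lemma cnonneg_limit:
  assumes lim: "f \<longlonglongrightarrow> l" and nonneg: "\<And>k. cnonneg (f k)"
  shows "cnonneg l"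
proof -
  have "(\<lambda>k. Im (f k)) \<longlonglongrightarrow> Im l"
    using lim by (rule tendsto_Im)
  moreover have "(\<lambda>k. Im (f k)) = (\<lambda>k. 0)"
    using nonneg by (simp add: cnonneg_def)
  ultimately have "Im l = 0"
    using LIMSEQ_unique tendsto_const by metis
  moreover have "0 \<le> Re l"
    using LIMSEQ_le_const[OF tendsto_Re[OF lim]] nonneg by (simp add: cnonneg_def)
  ultimately show ?thesis
    by (simp add: cnonneg_def)
qed

lemma cdense_approx_sequence:
  assumes "cdense P"
  obtains Y where "\<And>k. Y k \<in> P" "(\<lambda>k. cnorm (Y k - x)) \<longlonglongrightarrow> 0"
proof -
  have "\<exists>y\<in>P. cnorm (x - y) < 1 / real (Suc k)" for k
    using assms unfolding cdense_def by simp
  then obtain Y where "\<And>k. Y k \<in> P" and Y: "\<And>k. cnorm (x - Y k) < 1 / real (Suc k)"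
    by metis
  moreover have "(\<lambda>k. cnorm (Y k - x)) \<longlonglongrightarrow> 0"
    by (rule LIMSEQ_norm_0) (use Y in \<open>simp add: cnorm_minus_commute\<close>)
  ultimately show ?thesis
    using that by blast
qed

lemma cinner_quadratic_diff_bound:
  assumes S: "bounded_clinear S" and K: "K \<ge> 0" "\<And>x. cnorm (S x) \<le> K * cnorm x"
  shows "cmod (cinner y (S y) - cinner x (S x)) \<le> K * cnorm (y - x) * (2 * cnorm x + cnorm (y - x))"
proof -
  define d where "d = y - x"
  have b: "cmod (cinner u (S v)) \<le> K * cnorm u * cnorm v" for u v
    using cauchy_schwarz[of u "S v"] mult_left_mono[OF K(2)[of v], of "cnorm u"]
    by (simp add: mult_ac)
  have "cinner y (S y) - cinner x (S x) = cinner x (S d) + cinner d (S x) + cinner d (S d)"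
    by (simp add: d_def bounded_clinear_diff[OF S] cinner_diff_left cinner_diff_right algebra_simps)
  also have "cmod \<dots> \<le> cmod (cinner x (S d)) + cmod (cinner d (S x)) + cmod (cinner d (S d))"
    using norm_triangle_ineq[of "cinner x (S d) + cinner d (S x)" "cinner d (S d)"]
      norm_triangle_ineq[of "cinner x (S d)" "cinner d (S x)"] by linarith
  also have "\<dots> \<le> K * cnorm d * (2 * cnorm x + cnorm d)"
    using b[of x d] b[of d x] b[of d d] by (simp add: algebra_simps)
  finally show ?thesis
    by (simp add: d_def)
qed

lemma cnonneg_quadratic_form_dense:
  assumes S: "bounded_clinear S" and "cdense P"
    and pos: "\<And>y. y \<in> P \<Longrightarrow> cnonneg (cinner y (S y))"
  shows "cnonneg (cinner x (S x))"
proof -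
  obtain K where K: "K \<ge> 0" "\<And>x. cnorm (S x) \<le> K * cnorm x"
    using bounded_clinear_bound[OF S] by blast
  obtain Y where Y: "\<And>k. Y k \<in> P" and conv: "(\<lambda>k. cnorm (Y k - x)) \<longlonglongrightarrow> 0"
    using cdense_approx_sequence[OF \<open>cdense P\<close>] by blast
  have "(\<lambda>k. K * cnorm (Y k - x) * (2 * cnorm x + cnorm (Y k - x))) \<longlonglongrightarrow> K * 0 * (2 * cnorm x + 0)"
    by (intro tendsto_intros conv)
  then have "(\<lambda>k. K * cnorm (Y k - x) * (2 * cnorm x + cnorm (Y k - x))) \<longlonglongrightarrow> 0"
    by simp
  then have "(\<lambda>k. cinner (Y k) (S (Y k)) - cinner x (S x)) \<longlonglongrightarrow> 0"
    by (rule tendsto_0_le[where K = 1])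
      (use order_trans[OF cinner_quadratic_diff_bound[OF S K] abs_ge_self] in simp)
  then have "(\<lambda>k. cinner (Y k) (S (Y k))) \<longlonglongrightarrow> cinner x (S x)"
    by (rule LIM_zero_cancel)
  then show ?thesis
    by (rule cnonneg_limit) (rule pos[OF Y])
qed

section \<open>The maps \<open>\<rho>\<^sub>T\<close>\<close>

lemma invol_zero [simp]: "invol (0::'a::star_algebra) = 0"
  using invol_add[of "0::'a" 0] by simp

lemma cont_linear_op_zero: "cont_linear_op \<phi> \<Longrightarrow> \<phi> 0 x = 0"
  unfolding cont_linear_op_def by (metis add.right_neutral add_left_cancel)

lemma cont_linear_op_sum: "cont_linear_op \<phi> \<Longrightarrow> \<phi> (\<Sum>r\<in>R. g r) x = (\<Sum>r\<in>R. \<phi> (g r) x)"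
  by (induction R rule: infinite_finite_induct) (auto simp: cont_linear_op_zero cont_linear_op_def)

lemma cont_linear_op_compose:
  assumes \<phi>: "cont_linear_op \<phi>" and L: "bounded_clinear L" and R: "bounded_clinear R"
  shows "cont_linear_op (\<lambda>a x. L (\<phi> a (R x)))"
proof -
  obtain KL where KL: "KL \<ge> 0" "\<And>y. cnorm (L y) \<le> KL * cnorm y"
    using bounded_clinear_bound[OF L] by blast
  obtain KR where KR: "KR \<ge> 0" "\<And>x. cnorm (R x) \<le> KR * cnorm x"
    using bounded_clinear_bound[OF R] by blast
  define M where "M = (KL + 1) * (KR + 1)"
  have "M > 0"
    using KL(1) KR(1) by (simp add: M_def)
  have "KL * KR \<le> M"
    using KL(1) KR(1) by (simp add: M_def algebra_simps)
  have "\<exists>U. open U \<and> a0 \<in> U \<and> (\<forall>a\<in>U. \<forall>x. cnorm (L (\<phi> a (R x)) - L (\<phi> a0 (R x))) \<le> e * cnorm x)"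
    if "e > 0" for a0 e
  proof -
    obtain U where U: "open U" "a0 \<in> U"
      and near: "\<And>a y. a \<in> U \<Longrightarrow> cnorm (\<phi> a y - \<phi> a0 y) \<le> e / M * cnorm y"
      using \<phi> \<open>e > 0\<close> \<open>M > 0\<close> unfolding cont_linear_op_def by (meson divide_pos_pos)
    have "cnorm (L (\<phi> a (R x)) - L (\<phi> a0 (R x))) \<le> e * cnorm x" if "a \<in> U" for a x
    proof -
      have "e / M \<ge> 0"
        using \<open>e > 0\<close> \<open>M > 0\<close> by simp
      have "cnorm (L (\<phi> a (R x)) - L (\<phi> a0 (R x))) \<le> KL * cnorm (\<phi> a (R x) - \<phi> a0 (R x))"
        using KL(2)[of "\<phi> a (R x) - \<phi> a0 (R x)"] by (simp only: bounded_clinear_diff[OF L])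
      also have "\<dots> \<le> KL * (e / M * (KR * cnorm x))"
        using order_trans[OF near[OF that] mult_left_mono[OF KR(2) \<open>e / M \<ge> 0\<close>]]
        by (rule mult_left_mono[OF _ KL(1)])
      also have "\<dots> = (KL * KR / M) * (e * cnorm x)"
        by simp
      also have "\<dots> \<le> e * cnorm x"
        using \<open>M > 0\<close> \<open>KL * KR \<le> M\<close> \<open>e > 0\<close>
        by (intro mult_left_le_one_le) (auto simp: KL(1) KR(1))
      finally show ?thesis .
    qed
    then show ?thesis
      using U by blast
  qed
  moreover have "bounded_clinear (\<lambda>x. L (\<phi> a (R x)))" for a
    using \<phi> bounded_clinear_compose[OF L bounded_clinear_compose[OF _ R]]
    by (simp add: cont_linear_op_def)
  ultimately show ?thesis
    using \<phi> by (simp add: cont_linear_op_def bounded_clinear_add[OF L] bounded_clinear_scaleC[OF L])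
qed

lemma completely_n_positive_iff:
  fixes \<rho> :: "nat \<Rightarrow> nat \<Rightarrow> 'a::{star_algebra,topological_space} \<Rightarrow> 'h::complex_inner \<Rightarrow> 'h"
  shows "completely_n_positive n \<rho> \<longleftrightarrow>
     (\<forall>i<n. \<forall>j<n. cont_linear_op (\<rho> i j)) \<and>
     (\<forall>(m::nat) x. mat_pos_alg ({..<m} \<times> {..<n}) x \<longrightarrow>
        mat_pos_op ({..<m} \<times> {..<n}) (\<lambda>p q. \<rho> (snd p) (snd q) (x p q)))"
  by (simp add: completely_n_positive_def case_prod_unfold)

lemma mat_pos_op_cong:
  assumes "\<And>p q. p \<in> I \<Longrightarrow> q \<in> I \<Longrightarrow> T p q = T' p q"
  shows "mat_pos_op I T \<longleftrightarrow> mat_pos_op I T'"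
proof -
  have "(\<Sum>p\<in>I. \<Sum>q\<in>I. cinner (\<xi> p) (T p q (\<xi> q))) = (\<Sum>p\<in>I. \<Sum>q\<in>I. cinner (\<xi> p) (T' p q (\<xi> q)))"
    for \<xi>
    using assms by (intro sum.cong) auto
  then show ?thesis
    by (simp add: mat_pos_op_def)
qed

lemma completely_n_positive_cong:
  fixes \<rho> \<rho>' :: "nat \<Rightarrow> nat \<Rightarrow> 'a::{star_algebra,topological_space} \<Rightarrow> 'h::complex_inner \<Rightarrow> 'h"
  assumes "\<And>i j. i < n \<Longrightarrow> j < n \<Longrightarrow> \<rho> i j = \<rho>' i j"
  shows "completely_n_positive n \<rho> \<longleftrightarrow> completely_n_positive n \<rho>'"
proof -
  have "mat_pos_op ({..<m} \<times> {..<n}) (\<lambda>p q. \<rho> (snd p) (snd q) (x p q))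
    \<longleftrightarrow> mat_pos_op ({..<m} \<times> {..<n}) (\<lambda>p q. \<rho>' (snd p) (snd q) (x p q))"
    for m :: nat and x :: "nat \<times> nat \<Rightarrow> nat \<times> nat \<Rightarrow> 'a"
    using assms by (intro mat_pos_op_cong) auto
  then show ?thesis
    using assms by (simp add: completely_n_positive_iff)
qed

lemma mat_pos_alg_rank_one:
  assumes "finite I"
  shows "mat_pos_alg I (\<lambda>p q. invol (y p) * y q)"
proof (cases "I = {}")
  case True
  then show ?thesis
    by (simp add: mat_pos_alg_def)
next
  case False
  then obtain r0 where "r0 \<in> I"
    by blast
  have "invol (if r = r0 then y p else 0) * (if r = r0 then y q else 0)
      = (if r = r0 then invol (y p) * y q else 0)" for r p q
    by simp
  then have "(\<Sum>r\<in>I. invol (if r = r0 then y p else 0) * (if r = r0 then y q else 0))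
      = invol (y p) * y q" for p q
    using \<open>r0 \<in> I\<close> \<open>finite I\<close> by simp
  then show ?thesis
    unfolding mat_pos_alg_def by (intro exI[of _ "\<lambda>r p. if r = r0 then y p else 0"]) simp
qed

lemma cpn_le_rho_T_iff:
  fixes V :: "nat \<Rightarrow> 'h::chilbert \<Rightarrow> 'k::complex_inner"
  assumes "\<And>i. i < n \<Longrightarrow> bounded_clinear (V i)"
  shows "cpn_le n (rho_T V \<Phi> T1) (rho_T V \<Phi> T2) \<longleftrightarrow>
    completely_n_positive n (rho_T V \<Phi> (\<lambda>x. T2 x - T1 x))"
  unfolding cpn_le_def
  by (rule completely_n_positive_cong)
    (simp add: fun_eq_iff rho_T_def bounded_clinear_diff[OF bounded_clinear_adj[OF assms]])

lemma commutant_diff: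
  assumes "\<And>a. bounded_clinear (\<Phi> a)" and "S \<in> commutant \<Phi>" and "T \<in> commutant \<Phi>"
  shows "(\<lambda>x. T x - S x) \<in> commutant \<Phi>"
  using assms by (auto simp: commutant_def fun_eq_iff bounded_clinear_sub bounded_clinear_diff)

lemma cinner_rho_T:
  fixes V :: "nat \<Rightarrow> 'h::chilbert \<Rightarrow> 'k::complex_inner"
  assumes "bounded_clinear (V i)"
  shows "cinner \<xi> (rho_T V \<Phi> S i j a \<eta>) = cinner (V i \<xi>) (S (\<Phi> a (V j \<eta>)))"
  by (simp add: rho_T_def cinner_adj[OF assms])

lemma commutant_cinner_invol_mult:
  fixes \<Phi> :: "'a::{star_algebra,topological_space} \<Rightarrow> 'k::chilbert \<Rightarrow> 'k"
  assumes \<Phi>: "representation \<Phi>" and S: "S \<in> commutant \<Phi>"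
  shows "cinner u (S (\<Phi> (invol b * c) z)) = cinner (\<Phi> b u) (S (\<Phi> c z))"
proof -
  have comm: "S (\<Phi> a x) = \<Phi> a (S x)" for a x
    using S by (auto simp: commutant_def fun_eq_iff)
  have "S (\<Phi> (invol b * c) z) = S (\<Phi> (invol b) (\<Phi> c z))"
    using \<Phi> by (simp add: representation_def)
  also have "\<dots> = \<Phi> (invol b) (S (\<Phi> c z))"
    by (rule comm)
  also have "\<dots> = adj (\<Phi> b) (S (\<Phi> c z))"
    using \<Phi> by (simp add: representation_def)
  finally show ?thesis
    using \<Phi> by (simp add: cinner_adj representation_def cont_linear_op_def)
qed

lemma rho_T_quadratic_form:
  fixes \<Phi> :: "'a::{star_algebra,topological_space} \<Rightarrow> 'k::chilbert \<Rightarrow> 'k"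
    and V :: "nat \<Rightarrow> 'h::chilbert \<Rightarrow> 'k"
  assumes \<Phi>: "representation \<Phi>" and V: "\<And>i. i < n \<Longrightarrow> bounded_clinear (V i)"
    and S: "S \<in> commutant \<Phi>" and I: "\<And>p. p \<in> I \<Longrightarrow> snd p < n"
  shows "(\<Sum>p\<in>I. \<Sum>q\<in>I. cinner (\<xi> p) (rho_T V \<Phi> S (snd p) (snd q) (invol (y p) * y q) (\<xi> q)))
    = cinner (\<Sum>p\<in>I. \<Phi> (y p) (V (snd p) (\<xi> p))) (S (\<Sum>q\<in>I. \<Phi> (y q) (V (snd q) (\<xi> q))))"
proof -
  have "bounded_clinear S"
    using S by (simp add: commutant_def)
  have "(\<Sum>p\<in>I. \<Sum>q\<in>I. cinner (\<xi> p) (rho_T V \<Phi> S (snd p) (snd q) (invol (y p) * y q) (\<xi> q)))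
    = (\<Sum>p\<in>I. \<Sum>q\<in>I. cinner (\<Phi> (y p) (V (snd p) (\<xi> p))) (S (\<Phi> (y q) (V (snd q) (\<xi> q)))))"
    by (intro sum.cong refl)
      (simp add: cinner_rho_T V I commutant_cinner_invol_mult[OF \<Phi> S])
  also have "\<dots> = cinner (\<Sum>p\<in>I. \<Phi> (y p) (V (snd p) (\<xi> p))) (S (\<Sum>q\<in>I. \<Phi> (y q) (V (snd q) (\<xi> q))))"
    by (subst sum.swap)
      (simp add: cinner_sum_left cinner_sum_right bounded_clinear_sum[OF \<open>bounded_clinear S\<close>])
  finally show ?thesis .
qed

lemma cont_linear_op_rho_T:
  fixes V :: "nat \<Rightarrow> 'h::chilbert \<Rightarrow> 'k::complex_inner"
  assumes "cont_linear_op \<Phi>" "bounded_clinear (V i)" "bounded_clinear (V j)" "bounded_clinear S"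
  shows "cont_linear_op (rho_T V \<Phi> S i j)"
proof -
  have "bounded_clinear (\<lambda>y. adj (V i) (S y))"
    using bounded_clinear_compose[OF bounded_clinear_adj] assms(2,4) .
  then have "cont_linear_op (\<lambda>a x. adj (V i) (S (\<Phi> a (V j x))))"
    using assms(1,3) by (intro cont_linear_op_compose[where L = "\<lambda>y. adj (V i) (S y)"])
  then show ?thesis
    by (simp add: rho_T_def comp_def)
qed

lemma mat_pos_op_rho_T:
  fixes \<Phi> :: "'a::{star_algebra,topological_space} \<Rightarrow> 'k::chilbert \<Rightarrow> 'k"
    and V :: "nat \<Rightarrow> 'h::chilbert \<Rightarrow> 'k"
  assumes \<Phi>: "representation \<Phi>" and V: "\<And>i. i < n \<Longrightarrow> bounded_clinear (V i)"
    and S: "S \<in> commutant \<Phi>" and pos: "\<And>x. cnonneg (cinner x (S x))"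
    and I: "\<And>p. p \<in> I \<Longrightarrow> snd p < n" and "mat_pos_alg I x"
  shows "mat_pos_op I (\<lambda>p q. rho_T V \<Phi> S (snd p) (snd q) (x p q))"
  unfolding mat_pos_op_def
proof
  fix \<xi>
  obtain y where y: "\<And>p q. p \<in> I \<Longrightarrow> q \<in> I \<Longrightarrow> x p q = (\<Sum>r\<in>I. invol (y r p) * y r q)"
    using \<open>mat_pos_alg I x\<close> unfolding mat_pos_alg_def by blast
  define w where "w r = (\<Sum>p\<in>I. \<Phi> (y r p) (V (snd p) (\<xi> p)))" for r
  have "(\<Sum>p\<in>I. \<Sum>q\<in>I. cinner (\<xi> p) (rho_T V \<Phi> S (snd p) (snd q) (x p q) (\<xi> q)))
    = (\<Sum>p\<in>I. \<Sum>q\<in>I. \<Sum>r\<in>I.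
         cinner (\<xi> p) (rho_T V \<Phi> S (snd p) (snd q) (invol (y r p) * y r q) (\<xi> q)))"
  proof (intro sum.cong refl)
    fix p q
    assume "p \<in> I" "q \<in> I"
    then have "cont_linear_op (rho_T V \<Phi> S (snd p) (snd q))"
      using \<Phi> S by (intro cont_linear_op_rho_T V I) (simp_all add: representation_def commutant_def)
    then show "cinner (\<xi> p) (rho_T V \<Phi> S (snd p) (snd q) (x p q) (\<xi> q))
      = (\<Sum>r\<in>I. cinner (\<xi> p) (rho_T V \<Phi> S (snd p) (snd q) (invol (y r p) * y r q) (\<xi> q)))"
      by (simp add: y[OF \<open>p \<in> I\<close> \<open>q \<in> I\<close>] cont_linear_op_sum cinner_sum_right)
  qed
  also have "\<dots> = (\<Sum>p\<in>I. \<Sum>r\<in>I. \<Sum>q\<in>I.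
         cinner (\<xi> p) (rho_T V \<Phi> S (snd p) (snd q) (invol (y r p) * y r q) (\<xi> q)))"
    by (rule sum.cong[OF refl], rule sum.swap)
  also have "\<dots> = (\<Sum>r\<in>I. \<Sum>p\<in>I. \<Sum>q\<in>I.
         cinner (\<xi> p) (rho_T V \<Phi> S (snd p) (snd q) (invol (y r p) * y r q) (\<xi> q)))"
    by (rule sum.swap)
  also have "\<dots> = (\<Sum>r\<in>I. cinner (w r) (S (w r)))"
    unfolding w_def by (intro sum.cong refl rho_T_quadratic_form[OF \<Phi> V S I])
  finally show "cnonneg (\<Sum>p\<in>I. \<Sum>q\<in>I. cinner (\<xi> p) (rho_T V \<Phi> S (snd p) (snd q) (x p q) (\<xi> q)))"
    using pos by (simp add: cnonneg_sum)
qed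

lemma completely_n_positive_rho_T:
  fixes \<Phi> :: "'a::{star_algebra,topological_space} \<Rightarrow> 'k::chilbert \<Rightarrow> 'k"
    and V :: "nat \<Rightarrow> 'h::chilbert \<Rightarrow> 'k"
  assumes \<Phi>: "representation \<Phi>" and V: "\<And>i. i < n \<Longrightarrow> bounded_clinear (V i)"
    and S: "S \<in> commutant \<Phi>" and pos: "\<And>x. cnonneg (cinner x (S x))"
  shows "completely_n_positive n (rho_T V \<Phi> S)"
proof -
  have "cont_linear_op (rho_T V \<Phi> S i j)" if "i < n" "j < n" for i j
    using \<Phi> S by (intro cont_linear_op_rho_T V that) (simp_all add: representation_def commutant_def)
  moreover have "mat_pos_op ({..<m} \<times> {..<n}) (\<lambda>p q. rho_T V \<Phi> S (snd p) (snd q) (x p q))"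
    if "mat_pos_alg ({..<m} \<times> {..<n}) x" for m :: nat and x
    using that by (intro mat_pos_op_rho_T[OF \<Phi> V S pos]) auto
  ultimately show ?thesis
    by (simp add: completely_n_positive_iff)
qed

lemma rho_T_nonneg_on_generators:
  fixes \<Phi> :: "'a::{star_algebra,topological_space} \<Rightarrow> 'k::chilbert \<Rightarrow> 'k"
    and V :: "nat \<Rightarrow> 'h::chilbert \<Rightarrow> 'k" and m :: nat
  assumes \<Phi>: "representation \<Phi>" and V: "\<And>i. i < n \<Longrightarrow> bounded_clinear (V i)"
    and S: "S \<in> commutant \<Phi>" and cp: "completely_n_positive n (rho_T V \<Phi> S)"
    and J: "\<And>k. k < m \<Longrightarrow> J k < n"
  shows "cnonneg (cinner (\<Sum>k<m. \<Phi> (A k) (V (J k) (\<Xi> k))) (S (\<Sum>k<m. \<Phi> (A k) (V (J k) (\<Xi> k)))))"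
    (is "cnonneg (cinner ?v (S ?v))")
proof -
  let ?I = "{..<m} \<times> {..<n}"
  \<comment> \<open>a one-row matrix carrying \<open>A k\<close> at position \<open>(k, J k)\<close>\<close>
  define y where "y p = (if snd p = J (fst p) then A (fst p) else 0)" for p
  define \<xi> where "\<xi> p = (if snd p = J (fst p) then \<Xi> (fst p) else 0)" for p
  have "mat_pos_alg ?I (\<lambda>p q. invol (y p) * y q)"
    by (rule mat_pos_alg_rank_one) simp
  then have "mat_pos_op ?I (\<lambda>p q. rho_T V \<Phi> S (snd p) (snd q) (invol (y p) * y q))"
    using cp by (simp add: completely_n_positive_iff)
  then have "cnonneg (\<Sum>p\<in>?I. \<Sum>q\<in>?I. cinner (\<xi> p) (rho_T V \<Phi> S (snd p) (snd q) (invol (y p) * y q) (\<xi> q)))"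
    by (simp add: mat_pos_op_def)
  moreover have "(\<Sum>p\<in>?I. \<Sum>q\<in>?I. cinner (\<xi> p) (rho_T V \<Phi> S (snd p) (snd q) (invol (y p) * y q) (\<xi> q)))
    = cinner (\<Sum>p\<in>?I. \<Phi> (y p) (V (snd p) (\<xi> p))) (S (\<Sum>q\<in>?I. \<Phi> (y q) (V (snd q) (\<xi> q))))"
    by (rule rho_T_quadratic_form[OF \<Phi> V S]) auto
  moreover have "(\<Sum>p\<in>?I. \<Phi> (y p) (V (snd p) (\<xi> p))) = ?v"
  proof -
    have "cont_linear_op \<Phi>"
      using \<Phi> by (simp add: representation_def)
    have "(\<Sum>i<n. \<Phi> (y (k, i)) (V i (\<xi> (k, i)))) = \<Phi> (A k) (V (J k) (\<Xi> k))" if "k < m" for k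
      using J[OF that] by (simp add: y_def \<xi>_def cont_linear_op_zero[OF \<open>cont_linear_op \<Phi>\<close>] if_distrib
          cong: if_cong)
    then show ?thesis
      by (simp add: sum.cartesian_product')
  qed
  ultimately show ?thesis
    by simp
qed

lemma nonneg_if_completely_n_positive_rho_T:
  fixes \<Phi> :: "'a::{star_algebra,topological_space} \<Rightarrow> 'k::chilbert \<Rightarrow> 'k"
    and V :: "nat \<Rightarrow> 'h::chilbert \<Rightarrow> 'k"
  assumes \<Phi>: "representation \<Phi>" and V: "\<And>i. i < n \<Longrightarrow> bounded_clinear (V i)"
    and S: "S \<in> commutant \<Phi>" and cp: "completely_n_positive n (rho_T V \<Phi> S)"
    and dense: "cdense (cspan {\<Phi> a (V i \<xi>) | a i \<xi>. i < n})"
  shows "cnonneg (cinner x (S x))"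
proof (rule cnonneg_quadratic_form_dense[OF _ dense])
  show "bounded_clinear S"
    using S by (simp add: commutant_def)
next
  fix v
  assume "v \<in> cspan {\<Phi> a (V i \<xi>) | a i \<xi>. i < n}"
  then obtain m :: nat and c s where v: "v = (\<Sum>k<m. c k *\<^sub>C s k)"
    and s: "\<forall>k<m. \<exists>a i \<xi>. i < n \<and> s k = \<Phi> a (V i \<xi>)"
    unfolding cspan_def by blast
  then obtain A J \<Xi> where AJ: "\<And>k. k < m \<Longrightarrow> J k < n \<and> s k = \<Phi> (A k) (V (J k) (\<Xi> k))"
    by metis
  have "v = (\<Sum>k<m. \<Phi> (c k *\<^sub>C A k) (V (J k) (\<Xi> k)))"
    using \<Phi> AJ unfolding v by (intro sum.cong refl) (simp add: representation_def cont_linear_op_def)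
  then show "cnonneg (cinner v (S v))"
    using rho_T_nonneg_on_generators[OF \<Phi> V S cp] AJ by simp
qed

lemma nonneg_iff_completely_n_positive_rho_T:
  fixes \<Phi> :: "'a::{star_algebra,topological_space} \<Rightarrow> 'k::chilbert \<Rightarrow> 'k"
    and V :: "nat \<Rightarrow> 'h::chilbert \<Rightarrow> 'k"
  assumes "stinespring_rep n \<rho> \<Phi> V" and "S \<in> commutant \<Phi>"
  shows "(\<forall>x. cnonneg (cinner x (S x))) \<longleftrightarrow> completely_n_positive n (rho_T V \<Phi> S)"
proof -
  have \<Phi>: "representation \<Phi>" and V: "\<And>i. i < n \<Longrightarrow> bounded_clinear (V i)"
    and dense: "cdense (cspan {\<Phi> a (V i \<xi>) | a i \<xi>. i < n})"
    using assms(1) by (simp_all add: stinespring_rep_def)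
  show ?thesis
    using completely_n_positive_rho_T[of \<Phi> n V S] nonneg_if_completely_n_positive_rho_T[of \<Phi> n V S]
      \<Phi> V assms(2) dense by blast
qed

theorem lemma3p3:
  fixes n :: nat
    and \<rho> :: "nat \<Rightarrow> nat \<Rightarrow> 'a::{star_algebra,topological_space} \<Rightarrow> 'h::chilbert \<Rightarrow> 'h"
    and \<Phi> :: "'a \<Rightarrow> 'k::chilbert \<Rightarrow> 'k"
    and V :: "nat \<Rightarrow> 'h \<Rightarrow> 'k"
    and T1 T2 :: "'k \<Rightarrow> 'k"
  assumes "pro_cstar_algebra TYPE('a)"
    and "n \<ge> 1"
    and "completely_n_positive n \<rho>"
    and "stinespring_rep n \<rho> \<Phi> V"
    and "T1 \<in> commutant \<Phi>" and "pos_op T1"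
    and "T2 \<in> commutant \<Phi>" and "pos_op T2"
  shows "op_le T1 T2 \<longleftrightarrow> cpn_le n (rho_T V \<Phi> T1) (rho_T V \<Phi> T2)"
proof -
  have V: "\<And>i. i < n \<Longrightarrow> bounded_clinear (V i)" and "representation \<Phi>"
    using assms(4) by (simp_all add: stinespring_rep_def)
  then have S: "(\<lambda>x. T2 x - T1 x) \<in> commutant \<Phi>"
    using assms(5,7) by (intro commutant_diff) (simp_all add: representation_def cont_linear_op_def)
  have "op_le T1 T2 \<longleftrightarrow> (\<forall>x. cnonneg (cinner x (T2 x - T1 x)))"
    using S by (simp add: op_le_def pos_op_def commutant_def)
  also have "\<dots> \<longleftrightarrow> completely_n_positive n (rho_T V \<Phi> (\<lambda>x. T2 x - T1 x))"
    by (rule nonneg_iff_completely_n_positive_rho_T[OF assms(4) S])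
  also have "\<dots> \<longleftrightarrow> cpn_le n (rho_T V \<Phi> T1) (rho_T V \<Phi> T2)"
    by (rule cpn_le_rho_T_iff[OF V, symmetric])
  finally show ?thesis .
qed

end
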